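(* Let $(\eta_k)_{k\in\mathbb{N}}$ be independent random variables with values in $\mathbb{N}$, $P(\eta_k=i)=p_{ik}$ with $p_{ik}\ge0$ and $\sum_{i=1}^\infty p_{ik}=1$ for all $k$. Suppose there exists $i_0\in\mathbb{N}$ with $$\sum_{k=1}^\infty p_{i_0k}=+\infty.$$ Then the random variable $$\eta=\sum_{k=1}^\infty\frac{(-1)^{k-1}}{\eta_1(\eta_1+\eta_2)\cdots(\eta_1+\eta_2+\dots+\eta_k)}$$ has a distribution that is singular with respect to Lebesgue measure. *)

theory Defs
  imports "HOL-Probability.Probability"
begin

definition lebesgue_singular :: "real measure \<Rightarrow> bool" where
  "lebesgue_singular \<mu> \<longleftrightarrow>
     (\<exists>N \<in> sets borel. emeasure lborel N = 0 \<and> emeasure \<mu> (space \<mu> - N) = 0)"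

text \<open>The alternating series built from a sequence (0-based indexing:
term k corresponds to the paper's term k+1).\<close>
definition eta_series :: "(nat \<Rightarrow> nat) \<Rightarrow> real" where
  "eta_series x = (\<Sum>k. (-1) ^ k / (\<Prod>j\<le>k. real (\<Sum>i\<le>j. x i)))"

end

theory Submission
  imports Defs
begin

text \<open>Write \<open>T\<^sub>p(x) = \<Sum>\<^sub>k (-1)\<^sup>k / \<Prod>\<^sub>j\<^sub>\<le>\<^sub>k (p + x\<^sub>0 + \<dots> + x\<^sub>j)\<close>, so that the
random variable is \<open>T\<^sub>0(\<eta>\<^sub>1, \<eta>\<^sub>2, \<dots>)\<close> and \<open>1 - (p + x\<^sub>0) T\<^sub>p(x) = T\<^sub>p\<^sub>+\<^sub>x\<^sub>0(x\<^sub>1, x\<^sub>2, \<dots>)\<close>,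
a Leibniz series with values in \<open>[0, 1/(p + x\<^sub>0 + x\<^sub>1)]\<close>. Hence, if \<open>x\<^sub>n = i\<close>, the value
\<open>T\<^sub>p(x)\<close> lies in the union, over all values of \<open>x\<^sub>0, \<dots>, x\<^sub>n\<^sub>-\<^sub>1\<close>, of the preimages of an
interval of length \<open>1/(p+i)(p+i+1)\<close> under \<open>n\<close> successive affine maps. Each step scales
measures by \<open>1/(p + x\<^sub>0)\<close>, and a telescoping sum over \<open>x\<^sub>0\<close> shows that this union has
Lebesgue measure at most \<open>2\<^sup>-\<^sup>n/(p+1)(p+2)\<close>. By the first
Borel--Cantelli lemma the reals lying in infinitely many of the sets for \<open>p = 0\<close> form a
null set; by the second one \<open>\<eta>\<^sub>k = i\<^sub>0\<close> infinitely often almost surely, so the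
distribution of \<open>\<eta>\<close> is concentrated on that null set.\<close>

lemma (in prob_space) indep_events_compl:
  assumes "indep_events A I"
  shows "indep_events (\<lambda>i. space M - A i) I"
proof -
  have "indep_sets (\<lambda>i. sigma_sets (space M) {A i}) I"
    using assms by (intro indep_sets_sigma) (auto simp: indep_events_def_alt Int_stable_def)
  then show ?thesis
    unfolding indep_events_def_alt
    by (rule indep_sets_mono_sets) (auto intro: sigma_sets.Compl sigma_sets.Basic)
qed

lemma not_summable_nonneg_sum_unbounded:
  fixes f :: "nat \<Rightarrow> real"
  assumes "\<And>k. 0 \<le> f k" and "\<not> summable f"
  shows "\<exists>N>n. B < sum f {n..<N}"
proof -
  obtain N where N: "B + sum f {..<n} < sum f {..<N}"
    using summableI_nonneg_bounded[of f "B + sum f {..<n}"] assms by (meson not_le)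
  define N' where "N' = max N (Suc n)"
  have "sum f {..<N} \<le> sum f {..<N'}"
    unfolding N'_def by (rule sum_mono2) (auto simp: assms)
  also have "\<dots> = sum f {..<n} + sum f {n..<N'}"
    unfolding N'_def by (simp add: lessThan_atLeast0 sum.atLeastLessThan_concat)
  finally show ?thesis
    using N by (intro exI[of _ N']) (auto simp: N'_def)
qed

lemma (in prob_space) prob_INT_compl_eq_0:
  assumes indep: "indep_events A UNIV" and diverges: "\<not> summable (\<lambda>n. prob (A n))"
  shows "prob (\<Inter>k\<in>{n..}. space M - A k) = 0"
proof -
  let ?q = "prob (\<Inter>k\<in>{n..}. space M - A k)"
  have events: "A k \<in> events" for k
    using indep by (auto simp: indep_events_def)
  have bound: "?q \<le> exp (- B)" for B
  proof -
    obtain N where "n < N" and B: "B < (\<Sum>k\<in>{n..<N}. prob (A k))"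
      using not_summable_nonneg_sum_unbounded[OF _ diverges] by auto
    then have "?q \<le> prob (\<Inter>k\<in>{n..<N}. space M - A k)"
      using events by (intro finite_measure_mono) auto
    also have "\<dots> = (\<Prod>k\<in>{n..<N}. 1 - prob (A k))"
      using indep_events_compl[OF indep] \<open>n < N\<close> events
      by (auto simp: indep_events_def prob_compl)
    also have "\<dots> \<le> (\<Prod>k\<in>{n..<N}. exp (- prob (A k)))"
    proof (intro prod_mono conjI)
      show "1 - prob (A k) \<le> exp (- prob (A k))" for k
        using exp_ge_add_one_self[of "- prob (A k)"] by simp
    qed simp
    also have "\<dots> = exp (- (\<Sum>k\<in>{n..<N}. prob (A k)))"
      by (simp add: exp_sum[symmetric] sum_negf)
    also have "\<dots> \<le> exp (- B)"
      using B by simp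
    finally show ?thesis .
  qed
  show "?q = 0"
  proof (rule ccontr)
    assume "?q \<noteq> 0"
    then have "0 < ?q"
      by (simp add: less_le)
    then have "?q \<le> ?q / 2"
      using bound[of "- ln (?q / 2)"] by simp
    with \<open>0 < ?q\<close> show False
      by simp
  qed
qed

theorem (in prob_space) borel_cantelli_AE2:
  assumes indep: "indep_events A UNIV" and diverges: "\<not> summable (\<lambda>n. prob (A n))"
  shows "AE x in M. \<exists>\<^sub>F n in sequentially. x \<in> A n"
proof -
  have [measurable]: "A n \<in> events" for n
    using indep by (auto simp: indep_events_def)
  have "(\<Inter>k\<in>{n..}. space M - A k) \<in> null_sets M" for n
    using prob_INT_compl_eq_0[OF indep diverges, of n]
    by (intro null_setsI) (simp_all add: emeasure_eq_measure)
  then have "AE x in M. \<forall>n. x \<notin> (\<Inter>k\<in>{n..}. space M - A k)"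
    unfolding AE_all_countable by (intro allI AE_not_in)
  then show ?thesis
    by (rule AE_mp) (auto simp: frequently_sequentially)
qed

lemma (in prob_space) AE_frequently_eq_indep_vars:
  fixes X :: "nat \<Rightarrow> 'a \<Rightarrow> 'b"
  assumes indep: "indep_vars (\<lambda>_. count_space UNIV) X UNIV"
    and diverges: "(\<Sum>k. emeasure M {\<omega> \<in> space M. X k \<omega> = b}) = \<infinity>"
  shows "AE \<omega> in M. \<exists>\<^sub>F k in sequentially. X k \<omega> = b"
proof -
  let ?A = "\<lambda>k. {\<omega> \<in> space M. X k \<omega> = b}"
  have "indep_events ?A UNIV"
    using indep by (rule indep_eventsI_indep_vars) simp
  moreover have "\<not> summable (\<lambda>k. prob (?A k))"
    using diverges suminf_ennreal2[of "\<lambda>k. prob (?A k)"] by (auto simp: emeasure_eq_measure)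
  ultimately have "AE \<omega> in M. \<exists>\<^sub>F k in sequentially. \<omega> \<in> ?A k"
    by (rule borel_cantelli_AE2)
  then show ?thesis
    by (rule AE_mp) (auto intro!: AE_I2 elim: frequently_elim1)
qed

definition eta_term :: "nat \<Rightarrow> (nat \<Rightarrow> nat) \<Rightarrow> nat \<Rightarrow> real" where
  "eta_term p x k = 1 / (\<Prod>j\<le>k. real (p + (\<Sum>i\<le>j. x i)))"

definition eta_tail :: "nat \<Rightarrow> (nat \<Rightarrow> nat) \<Rightarrow> real" where
  "eta_tail p x = (\<Sum>k. (-1) ^ k * eta_term p x k)"

lemma eta_series_eq_eta_tail: "eta_series x = eta_tail 0 x"
  by (simp add: eta_series_def eta_tail_def eta_term_def)

lemma eta_term_0: "eta_term p x 0 = 1 / real (p + x 0)"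
  by (simp add: eta_term_def)

lemma eta_term_Suc: "eta_term p x (Suc k) = eta_term p x 0 * eta_term (p + x 0) (\<lambda>i. x (Suc i)) k"
proof -
  have "(\<Prod>j\<le>Suc k. real (p + (\<Sum>i\<le>j. x i)))
      = real (p + x 0) * (\<Prod>j\<le>k. real (p + x 0 + (\<Sum>i\<le>j. x (Suc i))))"
    by (simp only: prod.atMost_Suc_shift sum.atMost_Suc_shift) (simp add: add.assoc)
  then show ?thesis
    by (simp add: eta_term_def)
qed

lemma eta_term_nonneg: "0 \<le> eta_term p x k"
  unfolding eta_term_def by (auto intro!: divide_nonneg_nonneg prod_nonneg add_nonneg_nonneg sum_nonneg)

lemma prod_partial_sums_ge:
  assumes "\<And>i. x i \<ge> 1"
  shows "real (Suc k) \<le> (\<Prod>j\<le>k. real (p + (\<Sum>i\<le>j. x i)))"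
proof (induction k)
  case 0
  then show ?case
    using assms[of 0] by simp
next
  case (Suc k)
  have "Suc (Suc k) = (\<Sum>i\<le>Suc k. 1)"
    by simp
  also have "\<dots> \<le> (\<Sum>i\<le>Suc k. x i)"
    by (intro sum_mono assms)
  finally have factor: "2 \<le> real (p + (\<Sum>i\<le>Suc k. x i))"
    by linarith
  have "real (Suc (Suc k)) \<le> real (Suc k) * 2"
    by simp
  also have "\<dots> \<le> (\<Prod>j\<le>k. real (p + (\<Sum>i\<le>j. x i))) * real (p + (\<Sum>i\<le>Suc k. x i))"
    using Suc factor by (intro mult_mono) auto
  finally show ?case
    by (simp add: atMost_Suc mult.commute)
qed

lemma eta_term_le:
  assumes "\<And>i. x i \<ge> 1"
  shows "eta_term p x k \<le> 1 / real (Suc k)"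
  unfolding eta_term_def by (rule frac_le) (use prod_partial_sums_ge[OF assms] in auto)

lemma eta_term_Suc_le:
  assumes "\<And>i. x i \<ge> 1"
  shows "eta_term p x (Suc k) \<le> eta_term p x k"
proof -
  have "1 \<le> x 0"
    by (rule assms)
  also have "x 0 \<le> (\<Sum>i\<le>Suc k. x i)"
    by (rule member_le_sum) auto
  finally have "1 \<le> real (p + (\<Sum>i\<le>Suc k. x i))"
    by linarith
  moreover have "0 < (\<Prod>j\<le>k. real (p + (\<Sum>i\<le>j. x i)))"
    using prod_partial_sums_ge[of x k p] assms by fastforce
  ultimately show ?thesis
    unfolding eta_term_def by (simp add: atMost_Suc frac_le mult_le_cancel_left1)
qed

lemma eta_term_LIMSEQ_0:
  assumes "\<And>i. x i \<ge> 1"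
  shows "eta_term p x \<longlonglongrightarrow> 0"
proof (rule Lim_null_comparison[OF _ LIMSEQ_inverse_real_of_nat])
  show "\<forall>\<^sub>F k in sequentially. norm (eta_term p x k) \<le> inverse (real (Suc k))"
    using eta_term_le[OF assms] eta_term_nonneg by (simp add: inverse_eq_divide)
qed

lemma eta_tail_bounds:
  assumes "\<And>i. x i \<ge> 1"
  shows "0 \<le> eta_tail p x" and "eta_tail p x \<le> 1 / real (p + x 0)"
proof -
  note Leibniz = eta_term_LIMSEQ_0[of x p, OF assms] eta_term_nonneg[of p x] eta_term_Suc_le[of x p, OF assms]
  show "0 \<le> eta_tail p x" "eta_tail p x \<le> 1 / real (p + x 0)"
    using summable_Leibniz'(2,4)[OF Leibniz, of 0] by (simp_all add: eta_tail_def eta_term_0)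
qed

lemma summable_eta_tail:
  assumes "\<And>i. x i \<ge> 1"
  shows "summable (\<lambda>k. (-1) ^ k * eta_term p x k)"
proof -
  note Leibniz = eta_term_LIMSEQ_0[of x p, OF assms] eta_term_nonneg[of p x] eta_term_Suc_le[of x p, OF assms]
  show ?thesis
    by (rule summable_Leibniz'(1)[OF Leibniz])
qed

lemma eta_tail_shift:
  assumes "\<And>i. x i \<ge> 1"
  shows "1 - real (p + x 0) * eta_tail p x = eta_tail (p + x 0) (\<lambda>i. x (Suc i))"
proof -
  let ?a = "eta_term p x 0" and ?y = "\<lambda>i. x (Suc i)"
  have "eta_tail p x = ?a + (\<Sum>k. (-1) ^ Suc k * eta_term p x (Suc k))"
    unfolding eta_tail_def using suminf_split_head[OF summable_eta_tail[OF assms]] by simp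
  also have "(\<Sum>k. (-1) ^ Suc k * eta_term p x (Suc k)) = (\<Sum>k. - ?a * ((-1) ^ k * eta_term (p + x 0) ?y k))"
    by (simp add: eta_term_Suc mult.left_commute)
  also have "\<dots> = - ?a * eta_tail (p + x 0) ?y"
    unfolding eta_tail_def by (rule suminf_mult[OF summable_eta_tail]) (rule assms)
  finally have "eta_tail p x = ?a * (1 - eta_tail (p + x 0) ?y)"
    by (simp add: algebra_simps)
  moreover have "0 < real (p + x 0)"
    using assms[of 0] by simp
  ultimately show ?thesis
    by (simp add: eta_term_0 field_simps)
qed

lemma sets_borel_affine_preimage:
  assumes "A \<in> sets borel"
  shows "{y::real. 1 - c * y \<in> A} \<in> sets borel"
proof -
  have "(\<lambda>y::real. 1 - c * y) \<in> borel_measurable borel"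
    by measurable
  from measurable_sets[OF this assms] show ?thesis
    by (simp add: vimage_def)
qed

lemma emeasure_lborel_affine_preimage:
  assumes c: "0 < c" and A: "A \<in> sets borel"
  shows "emeasure lborel {y::real. 1 - c * y \<in> A} = ennreal (1 / c) * emeasure lborel A"
proof -
  let ?S = "{y::real. 1 - c * y \<in> A}" and ?T = "\<lambda>x::real. 1 / c + (- 1 / c) * x"
  have S: "?S \<in> sets borel"
    by (rule sets_borel_affine_preimage[OF A])
  have "emeasure lborel ?S = emeasure (density (distr lborel borel ?T) (\<lambda>_. ennreal \<bar>- 1 / c\<bar>)) ?S"
    using c by (subst lborel_real_affine[of "- 1 / c" "1 / c"]) simp_all
  also have "\<dots> = ennreal (1 / c) * emeasure lborel (?T -` ?S)"
    using c S by (simp add: emeasure_density_const emeasure_distr)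
  also have "?T -` ?S = A"
    using c by (auto simp: field_simps)
  finally show ?thesis .
qed

text \<open>The union ranges over the possible values \<open>Suc m\<close> of the first digit, which moves
into the offset \<open>p\<close>.\<close>

fun eta_cover :: "nat \<Rightarrow> nat \<Rightarrow> nat \<Rightarrow> real set" where
  "eta_cover i 0 p = {y. 1 - real (p + i) * y \<in> {0..1 / real (p + i + 1)}}"
| "eta_cover i (Suc n) p = (\<Union>m. {y. 1 - real (p + Suc m) * y \<in> eta_cover i n (p + Suc m)})"

lemma eta_cover_borel: "eta_cover i n p \<in> sets borel"
proof (induction n arbitrary: p)
  case 0
  show ?case
    by (simp add: sets_borel_affine_preimage del: atLeastAtMost_iff)
next
  case (Suc n)
  then show ?case
    by (auto intro!: sets.countable_UN sets_borel_affine_preimage simp del: eta_cover.simps(1))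
qed

lemma eta_tail_mem_eta_cover:
  assumes "\<And>j. x j \<ge> 1" and "x n = i"
  shows "eta_tail p x \<in> eta_cover i n p"
  using assms
proof (induction n arbitrary: p x)
  case 0
  let ?y = "\<lambda>j. x (Suc j)"
  have "0 \<le> eta_tail (p + x 0) ?y"
    by (rule eta_tail_bounds) (rule "0.prems")
  moreover have "eta_tail (p + x 0) ?y \<le> 1 / real (p + x 0 + x 1)"
    using eta_tail_bounds(2)[of ?y "p + x 0"] "0.prems" by simp
  moreover have "\<dots> \<le> 1 / real (p + x 0 + 1)"
    using "0.prems"(1)[of 1] by (intro frac_le) auto
  ultimately show ?case
    using eta_tail_shift[of x p] "0.prems" by simp
next
  case (Suc n)
  let ?y = "\<lambda>j. x (Suc j)"
  obtain m where m: "x 0 = Suc m"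
    using Suc.prems(1)[of 0] by (cases "x 0") auto
  have "eta_tail (p + x 0) ?y \<in> eta_cover i n (p + x 0)"
    using Suc.prems by (intro Suc.IH) auto
  then have "1 - real (p + Suc m) * eta_tail p x \<in> eta_cover i n (p + Suc m)"
    using eta_tail_shift[of x p] Suc.prems m by simp
  then show ?case
    by auto
qed

lemma telescoping_sums_inverse_triple:
  fixes a :: real
  assumes "0 \<le> a"
  shows "(\<lambda>m. 1 / ((a + m + 1) * (a + m + 2) * (a + m + 3))) sums (1 / (2 * (a + 1) * (a + 2)))"
proof -
  define f where "f m = 1 / (2 * (a + m + 1) * (a + m + 2))" for m :: nat
  have "f \<longlonglongrightarrow> 0"
  proof (rule Lim_null_comparison[OF _ LIMSEQ_inverse_real_of_nat])
    have "f m \<le> 1 / real (Suc m)" for m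
      unfolding f_def using assms by (intro frac_le) (auto simp: algebra_simps)
    then show "\<forall>\<^sub>F m in sequentially. norm (f m) \<le> inverse (real (Suc m))"
      using assms by (simp add: f_def inverse_eq_divide)
  qed
  from telescope_sums'[OF this] have "(\<lambda>m. f m - f (Suc m)) sums (f 0)"
    by simp
  moreover have "f m - f (Suc m) = 1 / ((a + m + 1) * (a + m + 2) * (a + m + 3))" for m
  proof -
    have "a + m + 1 \<noteq> 0" "a + m + 2 \<noteq> 0" "a + m + 3 \<noteq> 0"
      using assms by (simp_all add: add_nonneg_eq_0_iff)
    then show ?thesis
      unfolding f_def by (simp add: divide_simps add_ac) (simp add: algebra_simps)
  qed
  ultimately show ?thesis
    by (simp add: f_def)
qed

lemma emeasure_eta_cover_le:
  assumes "1 \<le> i"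
  shows "emeasure lborel (eta_cover i n p) \<le> ennreal ((1/2) ^ n / ((real p + 1) * (real p + 2)))"
proof (induction n arbitrary: p)
  case 0
  have "emeasure lborel (eta_cover i 0 p)
      = ennreal (1 / real (p + i)) * emeasure lborel {0..1 / real (p + i + 1)}"
    using assms by (subst eta_cover.simps, intro emeasure_lborel_affine_preimage) auto
  also have "\<dots> = ennreal (1 / real (p + i) * (1 / real (p + i + 1)))"
    by (subst ennreal_mult) auto
  also have "\<dots> \<le> ennreal ((1/2) ^ 0 / ((real p + 1) * (real p + 2)))"
    using assms by (intro ennreal_leI) (simp add: divide_simps mult_mono)
  finally show ?case .
next
  case (Suc n)
  let ?S = "\<lambda>m. {y. 1 - real (p + Suc m) * y \<in> eta_cover i n (p + Suc m)}"
  let ?t = "\<lambda>m. 1 / ((real p + m + 1) * (real p + m + 2) * (real p + m + 3))"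
  have "emeasure lborel (eta_cover i (Suc n) p) \<le> (\<Sum>m. emeasure lborel (?S m))"
    by (simp only: eta_cover.simps, rule emeasure_subadditive_countably)
       (auto intro!: sets_borel_affine_preimage eta_cover_borel)
  also have "\<dots> \<le> (\<Sum>m. ennreal ((1/2) ^ n * ?t m))"
  proof (rule suminf_le)
    fix m
    have "emeasure lborel (?S m) = ennreal (1 / real (p + Suc m)) * emeasure lborel (eta_cover i n (p + Suc m))"
      by (intro emeasure_lborel_affine_preimage eta_cover_borel) simp
    also have "\<dots> \<le> ennreal (1 / real (p + Suc m)) * ennreal ((1/2) ^ n / ((real (p + Suc m) + 1) * (real (p + Suc m) + 2)))"
      by (intro mult_left_mono Suc.IH) auto
    also have "\<dots> = ennreal ((1/2) ^ n * ?t m)"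
      by (subst ennreal_mult[symmetric]) (auto simp: field_simps)
    finally show "emeasure lborel (?S m) \<le> ennreal ((1/2) ^ n * ?t m)" .
  qed auto
  also have "\<dots> = ennreal ((1/2) ^ n * (1 / (2 * (real p + 1) * (real p + 2))))"
    using sums_mult[OF telescoping_sums_inverse_triple[of "real p"], of "(1/2) ^ n"]
    by (subst suminf_ennreal2) (auto simp: sums_iff)
  also have "\<dots> = ennreal ((1/2) ^ Suc n / ((real p + 1) * (real p + 2)))"
    by (simp add: field_simps)
  finally show ?case .
qed

lemma limsup_eta_cover_null:
  assumes "1 \<le> i"
  shows "limsup (\<lambda>n. eta_cover i n 0) \<in> null_sets lborel"
proof (rule borel_cantelli_limsup1)
  have bound: "emeasure lborel (eta_cover i n 0) \<le> ennreal ((1/2) ^ n / 2)" for n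
    using emeasure_eta_cover_le[OF assms, of n 0] by simp
  show "eta_cover i n 0 \<in> sets lborel" for n
    unfolding sets_lborel by (rule eta_cover_borel)
  show "emeasure lborel (eta_cover i n 0) < \<infinity>" for n
    by (rule le_less_trans[OF bound]) simp
  have measure_bound: "measure lborel (eta_cover i n 0) \<le> (1/2) ^ n / 2" for n
    unfolding measure_def by (rule enn2real_leI[OF _ bound]) simp
  have "summable (\<lambda>n. (1/2::real) ^ n / 2)"
    by (intro summable_divide summable_geometric) simp
  then show "summable (\<lambda>n. measure lborel (eta_cover i n 0))"
    by (rule summable_comparison_test'[where N = 0]) (use measure_bound in simp)
qed

lemma eta_series_mem_limsup_eta_cover:
  assumes "\<And>k. x k \<ge> 1" and "\<exists>\<^sub>F k in sequentially. x k = i"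
  shows "eta_series x \<in> limsup (\<lambda>n. eta_cover i n 0)"
proof -
  have "\<exists>\<^sub>F k in sequentially. eta_series x \<in> eta_cover i k 0"
    using assms(2) by (elim frequently_elim1)
      (auto simp: eta_series_eq_eta_tail intro!: eta_tail_mem_eta_cover assms(1))
  then show ?thesis
    by (auto simp: limsup_INF_SUP frequently_sequentially)
qed

lemma lebesgue_singularI:
  assumes N: "N \<in> null_sets lborel" and f: "f \<in> borel_measurable M"
    and concentrated: "AE x in M. f x \<in> N"
  shows "lebesgue_singular (distr M borel f)"
  unfolding lebesgue_singular_def
proof (intro bexI conjI)
  show N_borel: "N \<in> sets borel"
    using N by (simp add: null_sets_def)
  show "emeasure lborel N = 0"
    by (rule null_setsD1[OF N])
  have "AE x in distr M borel f. x \<in> N"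
    using concentrated f N_borel by (subst AE_distr_iff) auto
  then have "{x \<in> space (distr M borel f). x \<notin> N} \<in> null_sets (distr M borel f)"
    using N_borel by (subst AE_iff_null[symmetric]) auto
  then show "emeasure (distr M borel f) (space (distr M borel f) - N) = 0"
    by (simp add: set_diff_eq null_setsD1)
qed

theorem theorem7:
  fixes M :: "'a measure" and X :: "nat \<Rightarrow> 'a \<Rightarrow> nat"
  assumes "prob_space M"
    and "\<And>k. X k \<in> measurable M (count_space UNIV)"
    and "prob_space.indep_vars M (\<lambda>_. count_space UNIV) X UNIV"
    and "\<And>k \<omega>. \<omega> \<in> space M \<Longrightarrow> X k \<omega> \<ge> 1"
    and "\<exists>i0. (\<Sum>k. emeasure M {\<omega> \<in> space M. X k \<omega> = i0}) = \<infinity>"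
  shows "lebesgue_singular (distr M borel (\<lambda>\<omega>. eta_series (\<lambda>k. X k \<omega>)))"
proof -
  interpret prob_space M
    by (rule assms(1))
  obtain i0 where diverges: "(\<Sum>k. emeasure M {\<omega> \<in> space M. X k \<omega> = i0}) = \<infinity>"
    using assms(5) by blast
  have "1 \<le> i0"
  proof (rule ccontr)
    assume "\<not> 1 \<le> i0"
    then have "{\<omega> \<in> space M. X k \<omega> = i0} = {}" for k
      using assms(4)[of _ k] by fastforce
    with diverges show False
      by simp
  qed
  have "AE \<omega> in M. \<exists>\<^sub>F k in sequentially. X k \<omega> = i0"
    by (rule AE_frequently_eq_indep_vars[OF assms(3) diverges])
  then have "AE \<omega> in M. eta_series (\<lambda>k. X k \<omega>) \<in> limsup (\<lambda>n. eta_cover i0 n 0)"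
    by (rule AE_mp) (auto intro!: AE_I2 eta_series_mem_limsup_eta_cover assms(4))
  moreover have "(\<lambda>\<omega>. eta_series (\<lambda>k. X k \<omega>)) \<in> borel_measurable M"
    using assms(2) unfolding eta_series_def by measurable
  ultimately show ?thesis
    by (intro lebesgue_singularI[OF limsup_eta_cover_null[OF \<open>1 \<le> i0\<close>]])
qed

end
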